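(* Let $X$ be a Banach lattice with order continuous norm and $S$ a convex $C_0$-semigroup on $X$. Suppose that $S'_+(t,x)y=S'_-(t,x)y$ for some $x,y\in X$ and some $t\ge0$. Then the maps $[0,\infty)\to X$, $s\mapsto S'_\pm(s,x)y$ are continuous at $t$. In particular, $\lim_{s\downarrow0}S'_\pm(s,x)y=y$.
   Context: A Banach lattice $X$ has order continuous norm if $\|x_\alpha\|\to0$ for every net $x_\alpha\downarrow0$. An operator $T\colon X\to X$ is convex if $T(\lambda x+(1-\lambda)y)\le\lambda Tx+(1-\lambda)Ty$, bounded if $\sup_{\|x\|\le r}\|Tx\|<\infty$ for all $r>0$. A convex $C_0$-semigroup is a family $(S(t))_{t\ge0}$ of bounded convex operators $X\to X$ with $S(0)=\mathrm{id}$, $S(t+s)=S(t)S(s)$, and $S(t)x\to x$ as $t\downarrow0$. For $t\ge0$, $x,y\in X$: $S'_+(t,x)y:=\inf_{h>0}\frac{S(t)(x+hy)-S(t)x}{h}$ and $S'_-(t,x)y:=\sup_{h<0}\frac{S(t)(x+hy)-S(t)x}{h}$ (lattice infimum/supremum, which exist in $X$). *)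

theory Defs
  imports "HOL-Analysis.Analysis"
begin

definition lat_abs :: "'a::{ordered_real_vector, lattice} \<Rightarrow> 'a" where
  "lat_abs x = sup x (- x)"

definition banach_lattice :: "'a::{banach, ordered_real_vector, lattice} itself \<Rightarrow> bool" where
  "banach_lattice _ \<longleftrightarrow>
     (\<forall>x y::'a. lat_abs x \<le> lat_abs y \<longrightarrow> norm x \<le> norm y)"

definition is_lat_inf :: "'a::order set \<Rightarrow> 'a \<Rightarrow> bool" where
  "is_lat_inf A z \<longleftrightarrow> (\<forall>a\<in>A. z \<le> a) \<and> (\<forall>w. (\<forall>a\<in>A. w \<le> a) \<longrightarrow> w \<le> z)"

definition is_lat_sup :: "'a::order set \<Rightarrow> 'a \<Rightarrow> bool" where
  "is_lat_sup A z \<longleftrightarrow> (\<forall>a\<in>A. a \<le> z) \<and> (\<forall>w. (\<forall>a\<in>A. a \<le> w) \<longrightarrow> z \<le> w)"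

definition lat_Inf :: "'a::order set \<Rightarrow> 'a" where
  "lat_Inf A = (THE z. is_lat_inf A z)"

definition lat_Sup :: "'a::order set \<Rightarrow> 'a" where
  "lat_Sup A = (THE z. is_lat_sup A z)"

text \<open>Order continuous norm: for every net decreasing to 0 the norms tend to 0.
  A net \<open>x\<^sub>\<alpha> \<down> 0\<close> is represented by its range D: a nonempty downward directed
  set with lattice infimum 0, directed by the reverse order; the net is the
  identity on D.\<close>

definition order_continuous_norm :: "'a::{real_normed_vector, ordered_real_vector, lattice} itself \<Rightarrow> bool" where
  "order_continuous_norm _ \<longleftrightarrow>
     (\<forall>D::'a set. D \<noteq> {} \<and> (\<forall>a\<in>D. \<forall>b\<in>D. \<exists>c\<in>D. c \<le> a \<and> c \<le> b) \<and> is_lat_inf D 0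
        \<longrightarrow> ((\<lambda>d. norm d) \<longlongrightarrow> 0) (INF d\<in>D. principal {e\<in>D. e \<le> d}))"

definition convex_operator :: "('a::{ordered_real_vector} \<Rightarrow> 'a) \<Rightarrow> bool" where
  "convex_operator T \<longleftrightarrow>
     (\<forall>x y. \<forall>c::real. 0 \<le> c \<and> c \<le> 1 \<longrightarrow>
        T (c *\<^sub>R x + (1 - c) *\<^sub>R y) \<le> c *\<^sub>R T x + (1 - c) *\<^sub>R T y)"

definition bounded_operator :: "('a::real_normed_vector \<Rightarrow> 'a) \<Rightarrow> bool" where
  "bounded_operator T \<longleftrightarrow> (\<forall>r>0. \<exists>C. \<forall>x. norm x \<le> r \<longrightarrow> norm (T x) \<le> C)"

definition convex_C0_semigroup ::
    "(real \<Rightarrow> 'a::{real_normed_vector, ordered_real_vector} \<Rightarrow> 'a) \<Rightarrow> bool" where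
  "convex_C0_semigroup S \<longleftrightarrow>
     (\<forall>t\<ge>0. convex_operator (S t) \<and> bounded_operator (S t)) \<and>
     S 0 = id \<and>
     (\<forall>t\<ge>0. \<forall>s\<ge>0. S (t + s) = S t \<circ> S s) \<and>
     (\<forall>x. ((\<lambda>t. S t x) \<longlongrightarrow> x) (at_right 0))"

definition dir_deriv_plus ::
    "(real \<Rightarrow> 'a::{ordered_real_vector, lattice} \<Rightarrow> 'a) \<Rightarrow> real \<Rightarrow> 'a \<Rightarrow> 'a \<Rightarrow> 'a" where
  "dir_deriv_plus S t x y =
     lat_Inf {(1 / h) *\<^sub>R (S t (x + h *\<^sub>R y) - S t x) | h. h > 0}"

definition dir_deriv_minus ::
    "(real \<Rightarrow> 'a::{ordered_real_vector, lattice} \<Rightarrow> 'a) \<Rightarrow> real \<Rightarrow> 'a \<Rightarrow> 'a \<Rightarrow> 'a" where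
  "dir_deriv_minus S t x y =
     lat_Sup {(1 / h) *\<^sub>R (S t (x + h *\<^sub>R y) - S t x) | h. h < 0}"

end

(* For a convex operator T the difference quotients h |-> (T (x + h y) - T x) / h are
   increasing in h (they are chord slopes of a convex function), so S'_+(s,x)y and S'_-(s,x)y
   are their lattice infimum over h > 0 and supremum over h < 0.  Order continuity of the norm
   turns these order limits into norm limits, and for every h > 0 both derivatives at time s
   lie between the quotients of S s at -h and at h.  These quotients depend continuously on s
   because the orbits s |-> S s z are continuous; continuity from the left needs that the
   operators S tau with small tau are uniformly bounded near a point (Baire category), hence
   uniformly Lipschitz there.  If S'_+(t,x)y = S'_-(t,x)y, choosing h small and then s close
   to t pinches both derivatives at s to their common value at t.  Since S 0 = id, all
   quotients at s = 0 equal y, which gives the limits at 0. *)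

theory Submission
  imports Defs
begin

section \<open>Banach lattices\<close>

lemma nonneg_if_double_nonneg:
  fixes w :: "'a::ordered_real_vector"
  assumes "0 \<le> w + w"
  shows "0 \<le> w"
proof -
  have "0 \<le> (1/2::real) *\<^sub>R (w + w)"
    using assms by (intro scaleR_nonneg_nonneg) simp_all
  also have "(1/2::real) *\<^sub>R (w + w) = w"
    by (simp flip: scaleR_2)
  finally show ?thesis .
qed

lemma lat_abs_le_iff: "lat_abs u \<le> v \<longleftrightarrow> u \<le> v \<and> - u \<le> v"
  by (simp add: lat_abs_def)

lemma lat_abs_ge: "u \<le> lat_abs u" "- u \<le> lat_abs u"
  by (simp_all add: lat_abs_def)

lemma lat_abs_nonneg: "0 \<le> lat_abs z"
proof (rule nonneg_if_double_nonneg)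
  have "z + - z \<le> lat_abs z + lat_abs z"
    by (intro add_mono lat_abs_ge)
  then show "0 \<le> lat_abs z + lat_abs z" by simp
qed

lemma lat_abs_eq_self:
  assumes "0 \<le> z"
  shows "lat_abs z = z"
proof -
  have "- z \<le> 0" using assms by simp
  then have "- z \<le> z" using assms by (rule order_trans)
  then show ?thesis unfolding lat_abs_def by (rule sup_absorb1)
qed

lemma lat_abs_minus: "lat_abs (- z) = lat_abs z"
  by (simp add: lat_abs_def sup_commute)

lemma banach_lattice_norm_mono:
  fixes u v :: "'a::{banach, ordered_real_vector, lattice}"
  assumes bl: "banach_lattice TYPE('a)" and "- v \<le> u" "u \<le> v"
  shows "norm u \<le> norm v"
proof -
  have "- v \<le> v" using assms(2,3) by (rule order_trans)
  then have "- v + v \<le> v + v" by (rule add_right_mono)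
  then have "0 \<le> v + v" by simp
  then have "0 \<le> v" by (rule nonneg_if_double_nonneg)
  moreover have "lat_abs u \<le> v"
    unfolding lat_abs_le_iff using assms(3) minus_le_iff[THEN iffD1, OF assms(2)] by blast
  ultimately have "lat_abs u \<le> lat_abs v" by (simp add: lat_abs_eq_self)
  then show ?thesis using bl unfolding banach_lattice_def by blast
qed

lemma banach_lattice_norm_lat_abs:
  fixes u :: "'a::{banach, ordered_real_vector, lattice}"
  assumes bl: "banach_lattice TYPE('a)"
  shows "norm (lat_abs u) = norm u"
proof -
  have abs_abs: "lat_abs (lat_abs u) = lat_abs u"
    by (rule lat_abs_eq_self[OF lat_abs_nonneg])
  note mono = bl[unfolded banach_lattice_def, rule_format]
  show ?thesis
    using mono[of "lat_abs u" u] mono[of u "lat_abs u"] by (simp add: abs_abs)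
qed

lemma banach_lattice_norm_between:
  fixes a u b :: "'a::{banach, ordered_real_vector, lattice}"
  assumes bl: "banach_lattice TYPE('a)" and "a \<le> u" "u \<le> b"
  shows "norm u \<le> norm a + norm b"
proof -
  have "u \<le> lat_abs b"
    using assms(3) lat_abs_ge(1) by (rule order_trans)
  then have "u \<le> lat_abs a + lat_abs b"
    by (rule add_increasing[OF lat_abs_nonneg])
  moreover have "- u \<le> lat_abs a"
    using neg_le_iff_le[THEN iffD2, OF assms(2)] lat_abs_ge(2) by (rule order_trans)
  then have "- u \<le> lat_abs a + lat_abs b"
    by (rule add_increasing2[OF lat_abs_nonneg])
  then have "- (lat_abs a + lat_abs b) \<le> u"
    by (rule minus_le_iff[THEN iffD1])
  ultimately have "norm u \<le> norm (lat_abs a + lat_abs b)"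
    by (intro banach_lattice_norm_mono[OF bl])
  also have "\<dots> \<le> norm a + norm b"
    using norm_triangle_ineq[of "lat_abs a" "lat_abs b"]
    by (simp add: banach_lattice_norm_lat_abs[OF bl])
  finally show ?thesis .
qed

lemma banach_lattice_norm_sup_diff_le:
  fixes z w a :: "'a::{banach, ordered_real_vector, lattice}"
  assumes bl: "banach_lattice TYPE('a)"
  shows "norm (sup z a - sup w a) \<le> norm (z - w)"
proof -
  have sup_le: "sup p a \<le> sup q a + lat_abs (p - q)" for p q :: 'a
  proof (rule sup_least)
    have "p \<le> q + lat_abs (p - q)"
      using lat_abs_ge(1)[of "p - q"] by (simp add: diff_le_eq add.commute)
    also have "\<dots> \<le> sup q a + lat_abs (p - q)"
      by (intro add_right_mono sup_ge1)
    finally show "p \<le> sup q a + lat_abs (p - q)" .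
    show "a \<le> sup q a + lat_abs (p - q)"
      by (rule add_increasing2[OF lat_abs_nonneg sup_ge2])
  qed
  have "lat_abs (w - z) = lat_abs (z - w)"
    using lat_abs_minus[of "z - w"] by simp
  then have "norm (sup z a - sup w a) \<le> norm (lat_abs (z - w))"
    using sup_le[of z w] sup_le[of w z]
    by (intro banach_lattice_norm_mono[OF bl]) (auto simp: algebra_simps)
  then show ?thesis by (simp add: banach_lattice_norm_lat_abs[OF bl])
qed

lemma banach_lattice_tendsto_le:
  fixes f :: "'b \<Rightarrow> 'a::{banach, ordered_real_vector, lattice}"
  assumes bl: "banach_lattice TYPE('a)" and lim: "(f \<longlongrightarrow> z) F" and "F \<noteq> bot"
    and "eventually (\<lambda>i. f i \<le> a) F"
  shows "z \<le> a"
proof -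
  have "((\<lambda>i. sup (f i) a) \<longlongrightarrow> sup z a) F"
  proof (rule tendstoI)
    fix e :: real assume "0 < e"
    with lim have "eventually (\<lambda>i. dist (f i) z < e) F" by (rule tendstoD)
    then show "eventually (\<lambda>i. dist (sup (f i) a) (sup z a) < e) F"
    proof eventually_elim
      case (elim i)
      have "norm (sup (f i) a - sup z a) \<le> norm (f i - z)"
        by (rule banach_lattice_norm_sup_diff_le[OF bl])
      with elim show ?case by (simp add: dist_norm)
    qed
  qed
  moreover have "((\<lambda>i. sup (f i) a) \<longlongrightarrow> a) F"
    using assms(4) by (rule tendsto_eventually[OF eventually_mono]) (rule sup_absorb2)
  ultimately have "sup z a = a" using \<open>F \<noteq> bot\<close> tendsto_unique by blast
  then show ?thesis by (simp add: le_iff_sup)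
qed

lemma banach_lattice_tendsto_ge:
  fixes f :: "'b \<Rightarrow> 'a::{banach, ordered_real_vector, lattice}"
  assumes bl: "banach_lattice TYPE('a)" and "(f \<longlongrightarrow> z) F" and "F \<noteq> bot"
    and "eventually (\<lambda>i. a \<le> f i) F"
  shows "a \<le> z"
proof -
  have "- z \<le> - a"
    using assms(4) by (intro banach_lattice_tendsto_le[OF bl tendsto_minus[OF assms(2)] assms(3)])
      (simp add: eventually_mono)
  then show ?thesis by simp
qed

lemma banach_lattice_tendsto_squeeze:
  fixes f :: "'b \<Rightarrow> 'a::{banach, ordered_real_vector, lattice}"
    and lo up :: "real \<Rightarrow> 'b \<Rightarrow> 'a" and L U :: "real \<Rightarrow> 'a"
  assumes bl: "banach_lattice TYPE('a)"
    and between: "\<And>h. 0 < h \<Longrightarrow> eventually (\<lambda>s. lo h s \<le> f s \<and> f s \<le> up h s) F"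
    and lo: "\<And>h. 0 < h \<Longrightarrow> (lo h \<longlongrightarrow> L h) F"
    and up: "\<And>h. 0 < h \<Longrightarrow> (up h \<longlongrightarrow> U h) F"
    and L: "(L \<longlongrightarrow> c) (at_right 0)" and U: "(U \<longlongrightarrow> c) (at_right 0)"
  shows "(f \<longlongrightarrow> c) F"
proof (rule tendstoI)
  fix e :: real assume "0 < e"
  then have "eventually (\<lambda>h. 0 < h \<and> dist (L h) c < e / 4 \<and> dist (U h) c < e / 4) (at_right 0)"
    by (intro eventually_conj eventually_at_right_less tendstoD[OF L] tendstoD[OF U])
      (simp_all add: eventually_at_right_less)
  then obtain h where h: "0 < h" "dist (L h) c < e / 4" "dist (U h) c < e / 4"
    using eventually_happens'[OF trivial_limit_at_right_real] by blast
  have "eventually (\<lambda>s. dist (lo h s) (L h) < e / 4) F" "eventually (\<lambda>s. dist (up h s) (U h) < e / 4) F"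
    using \<open>0 < e\<close> by (intro tendstoD lo up \<open>0 < h\<close>; simp)+
  with between[OF \<open>0 < h\<close>] show "eventually (\<lambda>s. dist (f s) c < e) F"
  proof eventually_elim
    case (elim s)
    then have "norm (f s - c) \<le> norm (lo h s - c) + norm (up h s - c)"
      by (intro banach_lattice_norm_between[OF bl] diff_right_mono) simp_all
    moreover have "norm (lo h s - c) < e / 2" "norm (up h s - c) < e / 2"
      using elim h dist_triangle[of "lo h s" c "L h"] dist_triangle[of "up h s" c "U h"]
      by (simp_all add: dist_norm)
    ultimately show ?case by (simp add: dist_norm)
  qed
qed

lemma banach_lattice_archimedean:
  fixes p c :: "'a::{banach, ordered_real_vector, lattice}"
  assumes bl: "banach_lattice TYPE('a)" and "0 \<le> p" and le: "\<And>n::nat. real n *\<^sub>R p \<le> c"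
  shows "p = 0"
proof (rule ccontr)
  assume "p \<noteq> 0"
  then obtain n :: nat where n: "norm c < real n * norm p"
    using reals_Archimedean3[of "norm p"] by auto
  have "0 \<le> real n *\<^sub>R p" using \<open>0 \<le> p\<close> by (simp add: scaleR_nonneg_nonneg)
  then have "0 \<le> c" using le[of n] by (rule order_trans)
  then have "- c \<le> real n *\<^sub>R p"
    using \<open>0 \<le> real n *\<^sub>R p\<close> by (simp add: order_trans[of _ 0])
  then have "norm (real n *\<^sub>R p) \<le> norm c"
    using le[of n] by (rule banach_lattice_norm_mono[OF bl])
  with n show False by simp
qed

section \<open>Order continuity and monotone limits\<close>

lemma lat_Inf_eq: "is_lat_inf A c \<Longrightarrow> lat_Inf A = c"
  unfolding lat_Inf_def by (rule the_equality) (auto simp: is_lat_inf_def intro: order.antisym)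

lemma lat_Sup_eq: "is_lat_sup A c \<Longrightarrow> lat_Sup A = c"
  unfolding lat_Sup_def by (rule the_equality) (auto simp: is_lat_sup_def intro: order.antisym)

lemma is_lat_sup_if_is_lat_inf_uminus:
  fixes A :: "'a::ordered_ab_group_add set"
  assumes "is_lat_inf (uminus ` A) c"
  shows "is_lat_sup A (- c)"
  unfolding is_lat_sup_def
proof (intro conjI ballI allI impI)
  fix a assume "a \<in> A"
  then have "c \<le> - a" using assms unfolding is_lat_inf_def by blast
  then show "a \<le> - c" by (rule le_minus_iff[THEN iffD1])
next
  fix w assume "\<forall>a\<in>A. a \<le> w"
  then have "\<forall>a\<in>uminus ` A. - w \<le> a" by auto
  then have "- w \<le> c" using assms unfolding is_lat_inf_def by blast
  then show "- c \<le> w" by (rule minus_le_iff[THEN iffD1])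
qed

lemma order_continuous_normD:
  fixes D :: "'a::{banach, ordered_real_vector, lattice} set"
  assumes oc: "order_continuous_norm TYPE('a)" and "D \<noteq> {}"
    and directed: "\<forall>a\<in>D. \<forall>b\<in>D. \<exists>c\<in>D. c \<le> a \<and> c \<le> b" and "is_lat_inf D 0" and "0 < e"
  shows "\<exists>d0\<in>D. \<forall>d\<in>D. d \<le> d0 \<longrightarrow> norm d < e"
proof -
  let ?tail = "\<lambda>d. principal {d'\<in>D. d' \<le> d}"
  have "((\<lambda>d. norm d) \<longlongrightarrow> 0) (INF d\<in>D. ?tail d)"
    using assms unfolding order_continuous_norm_def by blast
  then have "eventually (\<lambda>d. norm d < e) (INF d\<in>D. ?tail d)"
    using \<open>0 < e\<close> by (auto dest: order_tendstoD(2))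
  moreover have "eventually P (INF d\<in>D. ?tail d) \<longleftrightarrow> (\<exists>d0\<in>D. eventually P (?tail d0))" for P
  proof (rule eventually_INF_base[OF \<open>D \<noteq> {}\<close>])
    fix a b assume "a \<in> D" "b \<in> D"
    then obtain c where "c \<in> D" "c \<le> a" "c \<le> b" using directed by blast
    then show "\<exists>c\<in>D. ?tail c \<le> inf (?tail a) (?tail b)"
      by (intro bexI[of _ c]) (auto simp: inf_principal intro: order_trans)
  qed
  ultimately show ?thesis by (auto simp: eventually_principal)
qed

text \<open>Order continuity only speaks about nets decreasing to 0, while the infimum of a
  monotone family is not known to exist in advance.  The gaps between its members and its
  lower bounds do decrease to 0, and making them small makes the family Cauchy.\<close>

definition lower_gaps :: "'a::ordered_ab_group_add set \<Rightarrow> 'a set" where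
  "lower_gaps A = {a - u | a u. a \<in> A \<and> (\<forall>a'\<in>A. u \<le> a')}"

lemma lower_gaps_nonneg: "d \<in> lower_gaps A \<Longrightarrow> 0 \<le> d"
  unfolding lower_gaps_def by auto

lemma lower_gaps_directed:
  fixes A :: "'a::{ordered_ab_group_add, lattice} set"
  assumes directed: "\<forall>a\<in>A. \<forall>b\<in>A. \<exists>c\<in>A. c \<le> a \<and> c \<le> b"
  shows "\<forall>d1\<in>lower_gaps A. \<forall>d2\<in>lower_gaps A. \<exists>d\<in>lower_gaps A. d \<le> d1 \<and> d \<le> d2"
proof (intro ballI)
  fix d1 d2 assume "d1 \<in> lower_gaps A" "d2 \<in> lower_gaps A"
  then obtain a1 u1 a2 u2 where d: "d1 = a1 - u1" "d2 = a2 - u2" "a1 \<in> A" "a2 \<in> A"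
    and u: "\<forall>a\<in>A. u1 \<le> a" "\<forall>a\<in>A. u2 \<le> a"
    unfolding lower_gaps_def by blast
  obtain c where "c \<in> A" "c \<le> a1" "c \<le> a2" using directed d(3,4) by blast
  have "\<forall>a\<in>A. sup u1 u2 \<le> a" using u by simp
  with \<open>c \<in> A\<close> have "c - sup u1 u2 \<in> lower_gaps A"
    unfolding lower_gaps_def by blast
  moreover have "c - sup u1 u2 \<le> d1" "c - sup u1 u2 \<le> d2"
    unfolding d using \<open>c \<le> a1\<close> \<open>c \<le> a2\<close> by (simp_all add: diff_mono)
  ultimately show "\<exists>d\<in>lower_gaps A. d \<le> d1 \<and> d \<le> d2" by blast
qed

lemma lat_inf_lower_gaps:
  fixes A :: "'a::{banach, ordered_real_vector, lattice} set"
  assumes bl: "banach_lattice TYPE('a)" and "a0 \<in> A" and "\<forall>a\<in>A. b \<le> a"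
  shows "is_lat_inf (lower_gaps A) 0"
  unfolding is_lat_inf_def
proof (intro conjI allI impI ballI)
  fix d assume "d \<in> lower_gaps A"
  then show "0 \<le> d" by (rule lower_gaps_nonneg)
next
  fix w assume w: "\<forall>d\<in>lower_gaps A. w \<le> d"
  define p where "p = sup w 0"
  have p_le: "p \<le> a - u" if "a \<in> A" "\<forall>a'\<in>A. u \<le> a'" for a u
    unfolding p_def using w that lower_gaps_nonneg by (auto simp: lower_gaps_def intro!: sup_least)
  have "\<forall>a\<in>A. b + real n *\<^sub>R p \<le> a" for n :: nat
  proof (induction n)
    case 0
    then show ?case using assms(3) by simp
  next
    case (Suc n)
    have "b + real (Suc n) *\<^sub>R p \<le> a" if "a \<in> A" for a
    proof -
      have "p + (b + real n *\<^sub>R p) \<le> a"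
        using p_le[OF that Suc] by (simp add: le_diff_eq)
      moreover have "b + real (Suc n) *\<^sub>R p = p + (b + real n *\<^sub>R p)"
        by (simp add: algebra_simps)
      ultimately show ?thesis by (simp only:)
    qed
    then show ?case by blast
  qed
  then have "real n *\<^sub>R p \<le> a0 - b" for n :: nat
    using \<open>a0 \<in> A\<close> by (simp add: le_diff_eq add.commute)
  then have "p = 0"
    by (rule banach_lattice_archimedean[OF bl, rotated]) (simp add: p_def)
  then show "w \<le> 0" unfolding p_def by (metis sup_ge1)
qed

lemma tendsto_if_eventually_close:
  fixes f :: "'b \<Rightarrow> 'a::complete_space"
  assumes "F \<noteq> bot" and close: "\<And>e. 0 < e \<Longrightarrow> \<exists>u. eventually (\<lambda>x. dist (f x) u < e) F"
  shows "\<exists>c. (f \<longlongrightarrow> c) F"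
proof -
  have "cauchy_filter (filtermap f F)"
    unfolding cauchy_filter_metric_filtermap
  proof (intro allI impI)
    fix e :: real assume "0 < e"
    then obtain u where "eventually (\<lambda>x. dist (f x) u < e / 2) F"
      using close[of "e / 2"] by auto
    moreover have "dist (f x) (f y) < e" if "dist (f x) u < e / 2" "dist (f y) u < e / 2" for x y
      using dist_triangle2[of "f x" "f y" u] that by linarith
    ultimately show "\<exists>P. eventually P F \<and> (\<forall>x y. P x \<and> P y \<longrightarrow> dist (f x) (f y) < e)"
      by blast
  qed
  then have "\<exists>c. filtermap f F \<le> nhds c"
    using \<open>F \<noteq> bot\<close>
    by (intro cauchy_filter_complete_converges[OF _ complete_UNIV]) (auto simp: filtermap_bot_iff)
  then show ?thesis by (simp add: filterlim_def)
qed

lemma mono_tendsto_at_right_is_lat_inf: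
  fixes f :: "real \<Rightarrow> 'a::{banach, ordered_real_vector, lattice}"
  assumes bl: "banach_lattice TYPE('a)"
    and mono: "\<And>h1 h2. 0 < h1 \<Longrightarrow> h1 \<le> h2 \<Longrightarrow> f h1 \<le> f h2"
    and lim: "(f \<longlongrightarrow> c) (at_right 0)"
  shows "is_lat_inf (f ` {0<..}) c"
  unfolding is_lat_inf_def
proof (intro conjI ballI allI impI)
  fix a assume "a \<in> f ` {0<..}"
  then obtain h where "0 < h" "a = f h" by auto
  moreover have "eventually (\<lambda>h'. f h' \<le> f h) (at_right 0)"
    unfolding eventually_at_right_field using \<open>0 < h\<close> mono by (intro exI[of _ h]) auto
  ultimately show "c \<le> a"
    using banach_lattice_tendsto_le[OF bl lim trivial_limit_at_right_real] by simp
next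
  fix w assume w: "\<forall>a\<in>f ` {0<..}. w \<le> a"
  from eventually_at_right_less have "eventually (\<lambda>h. w \<le> f h) (at_right 0)"
    by (rule eventually_mono) (use w in auto)
  then show "w \<le> c" by (rule banach_lattice_tendsto_ge[OF bl lim trivial_limit_at_right_real])
qed

lemma mono_bounded_tendsto_lat_inf:
  fixes f :: "real \<Rightarrow> 'a::{banach, ordered_real_vector, lattice}"
  assumes bl: "banach_lattice TYPE('a)" and oc: "order_continuous_norm TYPE('a)"
    and mono: "\<And>h1 h2. 0 < h1 \<Longrightarrow> h1 \<le> h2 \<Longrightarrow> f h1 \<le> f h2"
    and bounded: "\<And>h. 0 < h \<Longrightarrow> b \<le> f h"
  shows "\<exists>c. is_lat_inf (f ` {0<..}) c \<and> (f \<longlongrightarrow> c) (at_right 0)"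
proof -
  define A where "A = f ` {0<..}"
  have "\<forall>a1\<in>A. \<forall>a2\<in>A. \<exists>a\<in>A. a \<le> a1 \<and> a \<le> a2"
  proof (intro ballI)
    fix a1 a2 assume "a1 \<in> A" "a2 \<in> A"
    then obtain h1 h2 where "0 < h1" "0 < h2" "a1 = f h1" "a2 = f h2"
      unfolding A_def by auto
    then show "\<exists>a\<in>A. a \<le> a1 \<and> a \<le> a2"
      unfolding A_def by (intro bexI[of _ "f (min h1 h2)"]) (auto intro!: mono)
  qed
  then have directed: "\<forall>d1\<in>lower_gaps A. \<forall>d2\<in>lower_gaps A. \<exists>d\<in>lower_gaps A. d \<le> d1 \<and> d \<le> d2"
    by (rule lower_gaps_directed)
  have "f 1 - b \<in> lower_gaps A"
    using bounded unfolding lower_gaps_def A_def by force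
  then have "lower_gaps A \<noteq> {}" by blast
  have "is_lat_inf (lower_gaps A) 0"
    using bounded by (intro lat_inf_lower_gaps[OF bl, of "f 1"]) (auto simp: A_def)
  have "\<exists>u. eventually (\<lambda>h. dist (f h) u < e) (at_right 0)" if "0 < e" for e
  proof -
    obtain d0 where "d0 \<in> lower_gaps A" and small: "\<forall>d\<in>lower_gaps A. d \<le> d0 \<longrightarrow> norm d < e"
      using order_continuous_normD[OF oc \<open>lower_gaps A \<noteq> {}\<close> directed
          \<open>is_lat_inf (lower_gaps A) 0\<close> \<open>0 < e\<close>] by blast
    then obtain h0 u0 where "d0 = f h0 - u0" "0 < h0" and u0: "\<forall>a\<in>A. u0 \<le> a"
      unfolding lower_gaps_def A_def by blast
    then have "norm (f h - u0) < e" if "0 < h" "h < h0" for h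
      using small that u0 mono[of h h0] unfolding lower_gaps_def A_def
      by (auto intro!: diff_right_mono)
    then have "eventually (\<lambda>h. dist (f h) u0 < e) (at_right 0)"
      unfolding eventually_at_right_field dist_norm using \<open>0 < h0\<close> by blast
    then show ?thesis by blast
  qed
  then obtain c where lim: "(f \<longlongrightarrow> c) (at_right 0)"
    using tendsto_if_eventually_close[OF trivial_limit_at_right_real] by blast
  then show ?thesis
    using mono_tendsto_at_right_is_lat_inf[OF bl mono lim] by blast
qed

section \<open>Difference quotients of convex operators\<close>

definition diff_quotient :: "('a::real_vector \<Rightarrow> 'a) \<Rightarrow> 'a \<Rightarrow> 'a \<Rightarrow> real \<Rightarrow> 'a" where
  "diff_quotient T x y h = (1 / h) *\<^sub>R (T (x + h *\<^sub>R y) - T x)"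

lemma convex_operator_diff_le:
  fixes T :: "'a::ordered_real_vector \<Rightarrow> 'a"
  assumes "convex_operator T" and "0 \<le> l" "l \<le> 1"
  shows "T (l *\<^sub>R a + (1 - l) *\<^sub>R b) - T b \<le> l *\<^sub>R (T a - T b)"
proof -
  have "T (l *\<^sub>R a + (1 - l) *\<^sub>R b) \<le> l *\<^sub>R T a + (1 - l) *\<^sub>R T b"
    using assms unfolding convex_operator_def by blast
  then have "T (l *\<^sub>R a + (1 - l) *\<^sub>R b) - T b \<le> l *\<^sub>R T a + (1 - l) *\<^sub>R T b - T b"
    by (rule diff_right_mono)
  also have "l *\<^sub>R T a + (1 - l) *\<^sub>R T b - T b = l *\<^sub>R (T a - T b)"
    by (simp add: algebra_simps)
  finally show ?thesis .
qed

lemma convex_operator_chord_slopes: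
  fixes T :: "'a::ordered_real_vector \<Rightarrow> 'a" and x y :: 'a
  assumes cv: "convex_operator T" and "a < b" "b < c"
  defines "g \<equiv> \<lambda>s. T (x + s *\<^sub>R y)"
  shows "(1 / (b - a)) *\<^sub>R (g b - g a) \<le> (1 / (c - a)) *\<^sub>R (g c - g a)"
    and "(1 / (c - a)) *\<^sub>R (g c - g a) \<le> (1 / (c - b)) *\<^sub>R (g c - g b)"
proof -
  define l where "l = (b - a) / (c - a)"
  have l: "0 \<le> l" "l \<le> 1" using assms(2,3) by (auto simp: l_def)
  have "x + b *\<^sub>R y = l *\<^sub>R (x + c *\<^sub>R y) + (1 - l) *\<^sub>R (x + a *\<^sub>R y)"
  proof -
    have "l * (c - a) = b - a" using assms(2,3) by (simp add: l_def)
    then have "b = l * c + (1 - l) * a" by (simp add: algebra_simps)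
    then show ?thesis by (simp add: algebra_simps flip: scaleR_add_left)
  qed
  then have gb: "g b - g a \<le> l *\<^sub>R (g c - g a)"
    unfolding g_def using convex_operator_diff_le[OF cv l] by metis
  have "(1 / (b - a)) *\<^sub>R (g b - g a) \<le> (1 / (b - a)) *\<^sub>R (l *\<^sub>R (g c - g a))"
    using gb assms(2) by (intro scaleR_left_mono) simp_all
  also have "\<dots> = (1 / (c - a)) *\<^sub>R (g c - g a)"
    using assms(2,3) by (simp add: l_def)
  finally show "(1 / (b - a)) *\<^sub>R (g b - g a) \<le> (1 / (c - a)) *\<^sub>R (g c - g a)" .
  have "(1 - l) *\<^sub>R (g c - g a) \<le> g c - g b"
    using gb by (simp add: algebra_simps)
  then have "(1 / (c - b)) *\<^sub>R ((1 - l) *\<^sub>R (g c - g a)) \<le> (1 / (c - b)) *\<^sub>R (g c - g b)"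
    using assms(3) by (intro scaleR_left_mono) simp_all
  moreover have "(1 / (c - b)) * (1 - l) = 1 / (c - a)"
    using assms(2,3) by (simp add: l_def field_simps)
  ultimately show "(1 / (c - a)) *\<^sub>R (g c - g a) \<le> (1 / (c - b)) *\<^sub>R (g c - g b)"
    by (simp only: scaleR_scaleR)
qed

lemma diff_quotient_mono:
  fixes T :: "'a::ordered_real_vector \<Rightarrow> 'a"
  assumes cv: "convex_operator T" and "h1 \<le> h2" "h1 \<noteq> 0" "h2 \<noteq> 0"
  shows "diff_quotient T x y h1 \<le> diff_quotient T x y h2"
proof -
  note slopes = convex_operator_chord_slopes[OF cv, where x = x and y = y]
  have right: "diff_quotient T x y h = (1 / (h - 0)) *\<^sub>R (T (x + h *\<^sub>R y) - T (x + 0 *\<^sub>R y))"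
    and left: "diff_quotient T x y h = (1 / (0 - h)) *\<^sub>R (T (x + 0 *\<^sub>R y) - T (x + h *\<^sub>R y))" for h
    by (simp_all add: diff_quotient_def scaleR_diff_right)
  consider "h1 = h2" | "0 < h1" "h1 < h2" | "h1 < h2" "h2 < 0" | "h1 < 0" "0 < h2"
    using assms(2-4) by linarith
  then show ?thesis
  proof cases
    case 2
    then show ?thesis using slopes(1)[of 0 h1 h2] by (simp only: right)
  next
    case 3
    then show ?thesis using slopes(2)[of h1 h2 0] by (simp only: left)
  next
    case 4
    show ?thesis
      unfolding left[of h1] right[of h2] using slopes(1)[OF 4] slopes(2)[OF 4] by (rule order_trans)
  qed simp
qed

lemma dir_deriv_plus_eq: "dir_deriv_plus S t x y = lat_Inf (diff_quotient (S t) x y ` {0<..})"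
  unfolding dir_deriv_plus_def diff_quotient_def by (simp add: setcompr_eq_image greaterThan_def)

lemma dir_deriv_minus_eq: "dir_deriv_minus S t x y = lat_Sup (diff_quotient (S t) x y ` {..<0})"
  unfolding dir_deriv_minus_def diff_quotient_def by (simp add: setcompr_eq_image lessThan_def)

lemma dir_deriv_plus_tendsto:
  fixes S :: "real \<Rightarrow> 'a::{banach, ordered_real_vector, lattice} \<Rightarrow> 'a"
  assumes bl: "banach_lattice TYPE('a)" and oc: "order_continuous_norm TYPE('a)"
    and cv: "convex_operator (S t)"
  shows "is_lat_inf (diff_quotient (S t) x y ` {0<..}) (dir_deriv_plus S t x y)"
    and "(diff_quotient (S t) x y \<longlongrightarrow> dir_deriv_plus S t x y) (at_right 0)"
proof -
  have "diff_quotient (S t) x y h1 \<le> diff_quotient (S t) x y h2" if "0 < h1" "h1 \<le> h2" for h1 h2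
    using that by (intro diff_quotient_mono[OF cv]) auto
  moreover have "diff_quotient (S t) x y (- 1) \<le> diff_quotient (S t) x y h" if "0 < h" for h
    using that by (intro diff_quotient_mono[OF cv]) auto
  ultimately obtain c where "is_lat_inf (diff_quotient (S t) x y ` {0<..}) c"
    and "(diff_quotient (S t) x y \<longlongrightarrow> c) (at_right 0)"
    using mono_bounded_tendsto_lat_inf[OF bl oc] by blast
  moreover from this(1) have "dir_deriv_plus S t x y = c"
    unfolding dir_deriv_plus_eq by (rule lat_Inf_eq)
  ultimately show "is_lat_inf (diff_quotient (S t) x y ` {0<..}) (dir_deriv_plus S t x y)"
    and "(diff_quotient (S t) x y \<longlongrightarrow> dir_deriv_plus S t x y) (at_right 0)"
    by simp_all
qed

lemma dir_deriv_minus_tendsto: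
  fixes S :: "real \<Rightarrow> 'a::{banach, ordered_real_vector, lattice} \<Rightarrow> 'a"
  assumes bl: "banach_lattice TYPE('a)" and oc: "order_continuous_norm TYPE('a)"
    and cv: "convex_operator (S t)"
  shows "is_lat_sup (diff_quotient (S t) x y ` {..<0}) (dir_deriv_minus S t x y)"
    and "((\<lambda>h. diff_quotient (S t) x y (- h)) \<longlongrightarrow> dir_deriv_minus S t x y) (at_right 0)"
proof -
  let ?f = "\<lambda>h. - diff_quotient (S t) x y (- h)"
  have "?f h1 \<le> ?f h2" if "0 < h1" "h1 \<le> h2" for h1 h2
  proof -
    have "diff_quotient (S t) x y (- h2) \<le> diff_quotient (S t) x y (- h1)"
      using that by (intro diff_quotient_mono[OF cv]) auto
    then show ?thesis by simp
  qed
  moreover have "- diff_quotient (S t) x y 1 \<le> ?f h" if "0 < h" for h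
  proof -
    have "diff_quotient (S t) x y (- h) \<le> diff_quotient (S t) x y 1"
      using that by (intro diff_quotient_mono[OF cv]) auto
    then show ?thesis by simp
  qed
  ultimately obtain c where inf: "is_lat_inf (?f ` {0<..}) c" and lim: "(?f \<longlongrightarrow> c) (at_right 0)"
    using mono_bounded_tendsto_lat_inf[OF bl oc, where f = ?f] by blast
  have "?f ` {0<..} = uminus ` diff_quotient (S t) x y ` uminus ` {0<..}"
    by (simp only: image_image)
  also have "uminus ` {0<..} = {..<(0::real)}"
    by simp
  finally have "is_lat_inf (uminus ` diff_quotient (S t) x y ` {..<0}) c"
    using inf by simp
  then have sup: "is_lat_sup (diff_quotient (S t) x y ` {..<0}) (- c)"
    by (rule is_lat_sup_if_is_lat_inf_uminus)
  then have "dir_deriv_minus S t x y = - c"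
    unfolding dir_deriv_minus_eq by (rule lat_Sup_eq)
  with sup tendsto_minus[OF lim]
  show "is_lat_sup (diff_quotient (S t) x y ` {..<0}) (dir_deriv_minus S t x y)"
    and "((\<lambda>h. diff_quotient (S t) x y (- h)) \<longlongrightarrow> dir_deriv_minus S t x y) (at_right 0)"
    by simp_all
qed

lemma dir_deriv_bounds:
  fixes S :: "real \<Rightarrow> 'a::{banach, ordered_real_vector, lattice} \<Rightarrow> 'a"
  assumes bl: "banach_lattice TYPE('a)" and oc: "order_continuous_norm TYPE('a)"
    and cv: "convex_operator (S t)" and "0 < h"
  shows "diff_quotient (S t) x y (- h) \<le> dir_deriv_minus S t x y"
    and "dir_deriv_minus S t x y \<le> dir_deriv_plus S t x y"
    and "dir_deriv_plus S t x y \<le> diff_quotient (S t) x y h"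
proof -
  note inf = dir_deriv_plus_tendsto(1)[where S = S and t = t and x = x and y = y, OF bl oc cv, unfolded is_lat_inf_def]
  note sup = dir_deriv_minus_tendsto(1)[where S = S and t = t and x = x and y = y, OF bl oc cv, unfolded is_lat_sup_def]
  show "diff_quotient (S t) x y (- h) \<le> dir_deriv_minus S t x y"
    using sup \<open>0 < h\<close> by simp
  show "dir_deriv_plus S t x y \<le> diff_quotient (S t) x y h"
    using inf \<open>0 < h\<close> by simp
  have "diff_quotient (S t) x y k \<le> dir_deriv_plus S t x y" if "k < 0" for k
  proof -
    have "\<forall>a\<in>diff_quotient (S t) x y ` {0<..}. diff_quotient (S t) x y k \<le> a"
      using that by (auto intro!: diff_quotient_mono[OF cv])
    then show ?thesis using inf by blast
  qed
  then show "dir_deriv_minus S t x y \<le> dir_deriv_plus S t x y"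
    using sup by blast
qed

section \<open>Local boundedness and continuity of convex operators\<close>

lemma convex_operator_midpoint:
  fixes T :: "'a::ordered_real_vector \<Rightarrow> 'a"
  assumes "convex_operator T"
  shows "T ((1/2::real) *\<^sub>R u + (1/2::real) *\<^sub>R v) \<le> (1/2::real) *\<^sub>R T u + (1/2::real) *\<^sub>R T v"
  using assms[unfolded convex_operator_def, rule_format, where x = u and y = v and c = "1/2"] by simp

lemma convex_operator_midpoint_slope:
  fixes T :: "'a::ordered_real_vector \<Rightarrow> 'a"
  assumes cv: "convex_operator T"
  shows "T w - T (w - d) \<le> T (w + d) - T w"
proof -
  have "w = (1/2::real) *\<^sub>R (w + d) + (1 - 1/2) *\<^sub>R (w - d)"
    by (simp add: algebra_simps flip: scaleR_2)
  then have "T w - T (w - d) \<le> (1/2::real) *\<^sub>R (T (w + d) - T (w - d))"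
    using convex_operator_diff_le[OF cv, of "1/2" "w + d" "w - d"] by simp
  also have "\<dots> = (1/2::real) *\<^sub>R (T (w + d) - T w) + (1/2::real) *\<^sub>R (T w - T (w - d))"
    by (simp add: algebra_simps)
  finally have "(T w - T (w - d)) - (1/2::real) *\<^sub>R (T w - T (w - d)) \<le> (1/2::real) *\<^sub>R (T (w + d) - T w)"
    by (simp only: diff_le_eq)
  moreover have "u - (1/2::real) *\<^sub>R u = (1/2::real) *\<^sub>R u" for u :: 'a
    using scaleR_left_diff_distrib[of 1 "1/2" u] by simp
  ultimately show ?thesis by (simp add: scaleR_le_cancel_left_pos)
qed

lemma convex_operator_increment_bounds:
  fixes T :: "'a::ordered_real_vector \<Rightarrow> 'a"
  assumes cv: "convex_operator T" and "0 \<le> l" "l \<le> 1"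
  shows "l *\<^sub>R (T w - T (w - e)) \<le> T (w + l *\<^sub>R e) - T w"
    and "T (w + l *\<^sub>R e) - T w \<le> l *\<^sub>R (T (w + e) - T w)"
proof -
  have line: "w + l *\<^sub>R v = l *\<^sub>R (w + v) + (1 - l) *\<^sub>R w" for v
    by (simp add: algebra_simps)
  show "T (w + l *\<^sub>R e) - T w \<le> l *\<^sub>R (T (w + e) - T w)"
    unfolding line by (rule convex_operator_diff_le[OF cv assms(2,3)])
  have "T (w - l *\<^sub>R e) - T w \<le> l *\<^sub>R (T (w - e) - T w)"
    using convex_operator_diff_le[OF cv assms(2,3)] line[of "- e"] by simp
  then have "l *\<^sub>R (T w - T (w - e)) \<le> T w - T (w - l *\<^sub>R e)"
    by (simp add: algebra_simps)
  also have "\<dots> \<le> T (w + l *\<^sub>R e) - T w"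
    by (rule convex_operator_midpoint_slope[OF cv])
  finally show "l *\<^sub>R (T w - T (w - e)) \<le> T (w + l *\<^sub>R e) - T w" .
qed

lemma convex_operator_lipschitz_near:
  fixes T :: "'a::{banach, ordered_real_vector, lattice} \<Rightarrow> 'a"
  assumes bl: "banach_lattice TYPE('a)" and cv: "convex_operator T" and "0 < \<rho>"
    and bound: "\<And>v. norm (v - w) < \<rho> \<Longrightarrow> norm (T v) \<le> C"
    and "norm d \<le> \<rho> / 2"
  shows "norm (T (w + d) - T w) \<le> (8 * C / \<rho>) * norm d"
proof (cases "d = 0")
  case False
  define l where "l = norm d / (\<rho> / 2)"
  define e where "e = (1 / l) *\<^sub>R d"
  have l: "0 < l" "l \<le> 1" using False assms(3,5) by (simp_all add: l_def)
  have d: "d = l *\<^sub>R e" and "norm e = \<rho> / 2"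
    using l False assms(3) by (simp_all add: e_def l_def)
  have near: "norm (T v) \<le> C" if "norm (v - w) \<le> \<rho> / 2" for v
    using that assms(3) by (intro bound) simp
  have bounds: "norm (T w - T (w - e)) \<le> 2 * C" "norm (T (w + e) - T w) \<le> 2 * C"
    using near[of w] near[of "w - e"] near[of "w + e"] \<open>norm e = \<rho> / 2\<close> assms(3)
      norm_triangle_ineq4[of "T w" "T (w - e)"] norm_triangle_ineq4[of "T (w + e)" "T w"]
    by simp_all
  have "norm (T (w + d) - T w) \<le> norm (l *\<^sub>R (T w - T (w - e))) + norm (l *\<^sub>R (T (w + e) - T w))"
    unfolding d using convex_operator_increment_bounds[OF cv less_imp_le[OF l(1)] l(2)]
    by (rule banach_lattice_norm_between[OF bl])
  also have "\<dots> \<le> l * (2 * C) + l * (2 * C)"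
    unfolding norm_scaleR abs_of_pos[OF l(1)] using l(1) bounds
    by (intro add_mono mult_left_mono) simp_all
  also have "\<dots> = (8 * C / \<rho>) * norm d"
    by (simp add: l_def field_simps)
  finally show ?thesis .
qed simp

lemma convex_operator_continuous:
  fixes T :: "'a::{banach, ordered_real_vector, lattice} \<Rightarrow> 'a"
  assumes bl: "banach_lattice TYPE('a)" and cv: "convex_operator T" and "bounded_operator T"
  shows "isCont T w"
proof -
  obtain C where C: "\<And>v. norm v \<le> norm w + 1 \<Longrightarrow> norm (T v) \<le> C"
    using assms(3) unfolding bounded_operator_def by (metis add_nonneg_pos norm_ge_zero zero_less_one)
  have "norm (T v) \<le> C" if "norm (v - w) < 1" for v
    using that norm_triangle_ineq2[of v w] by (intro C) linarith
  then have lipschitz: "norm (T (w + d) - T w) \<le> (8 * C) * norm d" if "norm d \<le> 1 / 2" for d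
    using convex_operator_lipschitz_near[OF bl cv, of 1 w C d] that by simp
  have "eventually (\<lambda>v. norm (T v - T w) \<le> (8 * C) * norm (v - w)) (at w)"
    using eventually_at_ball[of "1/2" w UNIV] lipschitz[of "_ - w"]
    by (auto elim!: eventually_mono simp: dist_norm norm_minus_commute)
  moreover have "((\<lambda>v. (8 * C) * norm (v - w)) \<longlongrightarrow> 0) (at w)"
    by (intro tendsto_eq_intros) auto
  ultimately have "((\<lambda>v. T v - T w) \<longlongrightarrow> 0) (at w)"
    by (rule Lim_null_comparison)
  then show ?thesis unfolding isCont_def LIM_zero_iff .
qed

lemma baire_bounded_on_ball:
  fixes T :: "'i \<Rightarrow> 'a::banach \<Rightarrow> 'b::real_normed_vector"
  assumes cont: "\<And>i. continuous_on UNIV (T i)" and bounded: "\<And>v. \<exists>M. \<forall>i. norm (T i v) \<le> M"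
  shows "\<exists>a \<rho> C. 0 < \<rho> \<and> (\<forall>i. \<forall>v\<in>ball a \<rho>. norm (T i v) \<le> C)"
proof -
  define F where "F k = {v. \<forall>i. norm (T i v) \<le> real k}" for k :: nat
  have "closed (F k)" for k
    unfolding F_def using cont
    by (intro closed_Collect_all closed_Collect_le continuous_on_norm continuous_on_const)
  moreover have "\<Union>(range F) = UNIV"
  proof (intro set_eqI iffI)
    fix v :: 'a
    obtain M where "\<forall>i. norm (T i v) \<le> M" using bounded by blast
    moreover obtain k :: nat where "M \<le> real k" using real_arch_simple by blast
    ultimately show "v \<in> \<Union>(range F)" unfolding F_def by (auto intro: order_trans)
  qed simp
  ultimately have "\<exists>k. interior (F k) \<noteq> {}"
    using Baire_category_alt[of euclidean "range F"]
    by (auto simp: completely_metrizable_space_euclidean closed_closedin[symmetric])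
  then obtain k a where "a \<in> interior (F k)" by blast
  then obtain \<rho> where "0 < \<rho>" "ball a \<rho> \<subseteq> F k" by (auto simp: mem_interior)
  then show ?thesis unfolding F_def by blast
qed

lemma convex_operator_bound_near:
  fixes T :: "'a::{banach, ordered_real_vector, lattice} \<Rightarrow> 'a"
  assumes bl: "banach_lattice TYPE('a)" and cv: "convex_operator T"
    and bound: "\<forall>v\<in>ball a \<rho>. norm (T v) \<le> C" and "norm (v - w) < \<rho> / 2"
  shows "norm (T v) \<le> 2 * norm (T w) + norm (T (2 *\<^sub>R w - a)) + C"
proof -
  \<comment> \<open>\<open>v\<close> is the midpoint of \<open>b\<close> and a point of the ball around \<open>a\<close>;
    \<open>w\<close> is the midpoint of \<open>v\<close> and \<open>2 w - v\<close>.\<close>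
  define b where "b = 2 *\<^sub>R w - a"
  define U where "U z = (1/2::real) *\<^sub>R T b + (1/2::real) *\<^sub>R T (a + 2 *\<^sub>R (z - w))" for z
  have upper: "T z \<le> U z" "norm (U z) \<le> norm (T b) / 2 + C / 2"
    if "norm (z - w) < \<rho> / 2" for z
  proof -
    have "z = (1/2::real) *\<^sub>R b + (1/2::real) *\<^sub>R (a + 2 *\<^sub>R (z - w))"
      by (simp add: b_def algebra_simps)
    then show "T z \<le> U z"
      unfolding U_def using convex_operator_midpoint[OF cv] by metis
    have "norm (T (a + 2 *\<^sub>R (z - w))) \<le> C"
      using bound that by (simp add: dist_norm)
    then show "norm (U z) \<le> norm (T b) / 2 + C / 2"
      using norm_triangle_ineq[of "(1/2::real) *\<^sub>R T b" "(1/2::real) *\<^sub>R T (a + 2 *\<^sub>R (z - w))"]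
      by (simp add: U_def)
  qed
  have "(2 *\<^sub>R w - v) - w = - (v - w)"
    by (simp add: scaleR_2 algebra_simps)
  then have "norm ((2 *\<^sub>R w - v) - w) < \<rho> / 2"
    using assms(4) by (simp only: norm_minus_cancel)
  note upper' = upper[OF this]
  have "w = (1/2::real) *\<^sub>R v + (1/2::real) *\<^sub>R (2 *\<^sub>R w - v)"
    by (simp add: algebra_simps)
  then have "T w \<le> (1/2::real) *\<^sub>R T v + (1/2::real) *\<^sub>R T (2 *\<^sub>R w - v)"
    using convex_operator_midpoint[OF cv] by metis
  then have "2 *\<^sub>R T w \<le> 2 *\<^sub>R ((1/2::real) *\<^sub>R T v + (1/2::real) *\<^sub>R T (2 *\<^sub>R w - v))"
    by (rule scaleR_left_mono) simp
  then have "2 *\<^sub>R T w \<le> T v + T (2 *\<^sub>R w - v)"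
    by (simp add: scaleR_add_right)
  then have "2 *\<^sub>R T w - T (2 *\<^sub>R w - v) \<le> T v"
    by (simp add: diff_le_eq)
  then have "2 *\<^sub>R T w - U (2 *\<^sub>R w - v) \<le> T v"
    using upper'(1) by (meson diff_left_mono order_trans)
  then have "norm (T v) \<le> norm (2 *\<^sub>R T w - U (2 *\<^sub>R w - v)) + norm (U v)"
    using upper(1)[OF assms(4)] by (rule banach_lattice_norm_between[OF bl])
  also have "\<dots> \<le> 2 * norm (T w) + norm (U (2 *\<^sub>R w - v)) + norm (U v)"
    using norm_triangle_ineq4[of "2 *\<^sub>R T w"] by simp
  also have "\<dots> \<le> 2 * norm (T w) + norm (T b) + C"
    using upper'(2) upper(2)[OF assms(4)] by simp
  finally show ?thesis by (simp add: b_def)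
qed

lemma convex_uniform_boundedness:
  fixes T :: "'i \<Rightarrow> 'a::{banach, ordered_real_vector, lattice} \<Rightarrow> 'a"
  assumes bl: "banach_lattice TYPE('a)" and cv: "\<And>i. convex_operator (T i)"
    and cont: "\<And>i. continuous_on UNIV (T i)" and bounded: "\<And>v. \<exists>M. \<forall>i. norm (T i v) \<le> M"
  shows "\<exists>\<rho>>0. \<exists>C. \<forall>i v. norm (v - w) < \<rho> \<longrightarrow> norm (T i v) \<le> C"
proof -
  obtain a \<rho> C where "0 < \<rho>" and ball: "\<forall>i. \<forall>v\<in>ball a \<rho>. norm (T i v) \<le> C"
    using baire_bounded_on_ball[OF cont bounded] by blast
  obtain Mw where Mw: "\<forall>i. norm (T i w) \<le> Mw" using bounded by blast
  obtain Mb where Mb: "\<forall>i. norm (T i (2 *\<^sub>R w - a)) \<le> Mb" using bounded by blast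
  have "norm (T i v) \<le> 2 * Mw + Mb + C" if "norm (v - w) < \<rho> / 2" for i v
    using convex_operator_bound_near[OF bl cv spec[OF ball, of i] that] Mw Mb
    by (smt (verit, best))
  then show ?thesis using \<open>0 < \<rho>\<close> by (intro exI[of _ "\<rho> / 2"]) auto
qed

section \<open>Orbits of convex C0-semigroups\<close>

lemma filterlim_at_left_to_0:
  "filterlim f F (at_left t) \<longleftrightarrow> filterlim (\<lambda>r. f (t - r)) F (at_right 0)"
  for t :: real
proof -
  have "at_left t = filtermap (\<lambda>r. t - r) (at_right 0)"
    by (simp add: at_left_minus[of t] at_right_to_0[of "- t"] filtermap_filtermap)
  then show ?thesis by (simp add: filterlim_def filtermap_filtermap)
qed

context
  fixes S :: "real \<Rightarrow> 'a::{banach, ordered_real_vector, lattice} \<Rightarrow> 'a"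
  assumes sg: "convex_C0_semigroup S"
begin

lemma convex_C0_semigroup_convex: "0 \<le> t \<Longrightarrow> convex_operator (S t)"
  and convex_C0_semigroup_bounded: "0 \<le> t \<Longrightarrow> bounded_operator (S t)"
  and convex_C0_semigroup_zero: "S 0 z = z"
  and convex_C0_semigroup_add: "0 \<le> a \<Longrightarrow> 0 \<le> b \<Longrightarrow> S (a + b) z = S a (S b z)"
  and convex_C0_semigroup_tendsto_0: "((\<lambda>t. S t z) \<longlongrightarrow> z) (at_right 0)"
  using sg unfolding convex_C0_semigroup_def by auto

lemma convex_C0_semigroup_isCont:
  assumes bl: "banach_lattice TYPE('a)" and "0 \<le> t"
  shows "isCont (S t) z"
  using assms by (intro convex_operator_continuous convex_C0_semigroup_convex convex_C0_semigroup_bounded)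

lemma convex_C0_semigroup_uniformly_bounded_seq:
  assumes bl: "banach_lattice TYPE('a)" and "\<And>n. 0 \<le> \<tau> n" and "\<tau> \<longlonglongrightarrow> 0"
  shows "\<exists>\<rho>>0. \<exists>C. \<forall>n v. norm (v - w) < \<rho> \<longrightarrow> norm (S (\<tau> n) v) \<le> C"
proof (rule convex_uniform_boundedness[OF bl])
  show "convex_operator (S (\<tau> n))" for n
    using assms(2) by (rule convex_C0_semigroup_convex)
  show "continuous_on UNIV (S (\<tau> n))" for n
    by (intro continuous_at_imp_continuous_on ballI convex_C0_semigroup_isCont[OF bl assms(2)])
  show "\<exists>M. \<forall>n. norm (S (\<tau> n) z) \<le> M" for z
  proof -
    have "continuous (at 0 within {0..}) (\<lambda>t. S t z)"
      unfolding continuous_within at_within_Ici_at_right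
      by (simp add: convex_C0_semigroup_zero convex_C0_semigroup_tendsto_0)
    then have "(\<lambda>n. S (\<tau> n) z) \<longlonglongrightarrow> z"
      using assms(2,3) unfolding continuous_within_sequentially
      by (auto simp: o_def convex_C0_semigroup_zero)
    then have "Bseq (\<lambda>n. S (\<tau> n) z)"
      by (intro convergent_imp_Bseq convergentI)
    then show ?thesis unfolding Bseq_def by blast
  qed
qed

lemma convex_C0_semigroup_locally_bounded:
  assumes bl: "banach_lattice TYPE('a)"
  shows "\<exists>\<delta>>0. \<exists>\<rho>>0. \<exists>C. \<forall>\<tau> v. 0 \<le> \<tau> \<and> \<tau> \<le> \<delta> \<and> norm (v - w) < \<rho> \<longrightarrow> norm (S \<tau> v) \<le> C"
proof (rule ccontr)
  assume unbounded: "\<not> ?thesis"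
  have "\<exists>\<tau> v. 0 \<le> \<tau> \<and> \<tau> \<le> inverse (real (Suc n)) \<and> norm (v - w) < inverse (real (Suc n))
      \<and> real n < norm (S \<tau> v)" for n
  proof -
    have "0 < inverse (real (Suc n))" by simp
    with unbounded have "\<not> (\<forall>\<tau> v. 0 \<le> \<tau> \<and> \<tau> \<le> inverse (real (Suc n)) \<and> norm (v - w) < inverse (real (Suc n))
        \<longrightarrow> norm (S \<tau> v) \<le> real n)"
      by blast
    then show ?thesis by (auto simp: not_le)
  qed
  then obtain \<tau> v where \<tau>: "\<And>n. 0 \<le> \<tau> n" "\<And>n. \<tau> n \<le> inverse (real (Suc n))"
    and v: "\<And>n. norm (v n - w) < inverse (real (Suc n))"
    and large: "\<And>n. real n < norm (S (\<tau> n) (v n))"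
    by metis
  have "\<tau> \<longlonglongrightarrow> 0"
    using \<tau> by (intro Lim_null_comparison[OF _ LIMSEQ_inverse_real_of_nat]) simp
  then obtain \<rho> C where "0 < \<rho>" and C: "\<And>n v. norm (v - w) < \<rho> \<Longrightarrow> norm (S (\<tau> n) v) \<le> C"
    using convex_C0_semigroup_uniformly_bounded_seq[where \<tau> = \<tau> and w = w, OF bl \<tau>(1)] by blast
  obtain N :: nat where "inverse (real (Suc N)) < \<rho>"
    using reals_Archimedean \<open>0 < \<rho>\<close> by blast
  moreover obtain k :: nat where "C < real k"
    using reals_Archimedean2 by blast
  define n where "n = max N k"
  have "inverse (real (Suc n)) \<le> inverse (real (Suc N))"
    unfolding n_def by (simp add: le_imp_inverse_le)
  with v[of n] have "norm (v n - w) < \<rho>"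
    using \<open>inverse (real (Suc N)) < \<rho>\<close> by linarith
  then have "norm (S (\<tau> n) (v n)) \<le> C" by (rule C)
  moreover have "C < real n"
    using \<open>C < real k\<close> unfolding n_def by linarith
  ultimately show False using large[of n] by linarith
qed

lemma convex_C0_semigroup_tendsto_at_right:
  assumes "0 \<le> t"
  shows "((\<lambda>s. S s w) \<longlongrightarrow> S t w) (at_right t)"
  unfolding filterlim_at_right_to_0[of _ _ t]
proof (rule Lim_transform_eventually)
  show "((\<lambda>r. S r (S t w)) \<longlongrightarrow> S t w) (at_right 0)"
    by (rule convex_C0_semigroup_tendsto_0)
  show "eventually (\<lambda>r. S r (S t w) = S (r + t) w) (at_right 0)"
    using eventually_at_right_less[of "0::real"]
    by (rule eventually_mono) (use assms in \<open>simp add: convex_C0_semigroup_add\<close>)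
qed

text \<open>Near \<open>w\<close> the operators \<open>S \<tau>\<close> with \<open>\<tau> \<le> \<delta>\<close> are uniformly bounded, hence uniformly
  Lipschitz, so \<open>S (\<epsilon> - r) w\<close> stays close to \<open>S (\<epsilon> - r) (S r w) = S \<epsilon> w\<close>.\<close>

lemma convex_C0_semigroup_tendsto_at_left_small:
  assumes bl: "banach_lattice TYPE('a)"
  shows "\<exists>\<delta>>0. \<forall>\<epsilon>. 0 < \<epsilon> \<and> \<epsilon> \<le> \<delta> \<longrightarrow> ((\<lambda>s. S s w) \<longlongrightarrow> S \<epsilon> w) (at_left \<epsilon>)"
proof -
  obtain \<delta> \<rho> C where "0 < \<delta>" "0 < \<rho>"
    and bound: "\<And>\<tau> v. 0 \<le> \<tau> \<Longrightarrow> \<tau> \<le> \<delta> \<Longrightarrow> norm (v - w) < \<rho> \<Longrightarrow> norm (S \<tau> v) \<le> C"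
    using convex_C0_semigroup_locally_bounded[OF bl, of w] by blast
  have "((\<lambda>r. S (\<epsilon> - r) w) \<longlongrightarrow> S \<epsilon> w) (at_right 0)" if "0 < \<epsilon>" "\<epsilon> \<le> \<delta>" for \<epsilon>
  proof -
    have "eventually (\<lambda>r. dist (S r w) w < \<rho> / 2) (at_right 0)"
      using \<open>0 < \<rho>\<close> by (intro tendstoD[OF convex_C0_semigroup_tendsto_0]) simp
    with eventually_at_right_real[OF \<open>0 < \<epsilon>\<close>]
    have "eventually (\<lambda>r. norm (S (\<epsilon> - r) w - S \<epsilon> w) \<le> (8 * C / \<rho>) * norm (S r w - w))
        (at_right 0)"
    proof eventually_elim
      case (elim r)
      have "S \<epsilon> w = S (\<epsilon> - r) (w + (S r w - w))"
        using elim by (simp flip: convex_C0_semigroup_add)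
      moreover have "norm (S (\<epsilon> - r) (w + (S r w - w)) - S (\<epsilon> - r) w)
          \<le> (8 * C / \<rho>) * norm (S r w - w)"
        using elim that \<open>0 < \<rho>\<close>
        by (intro convex_operator_lipschitz_near[OF bl convex_C0_semigroup_convex] bound)
          (auto simp: dist_norm)
      ultimately show ?case by (simp add: norm_minus_commute)
    qed
    moreover have "((\<lambda>r. S r w - w) \<longlongrightarrow> 0) (at_right 0)"
      using convex_C0_semigroup_tendsto_0 by (simp add: LIM_zero_iff)
    then have "((\<lambda>r. (8 * C / \<rho>) * norm (S r w - w)) \<longlongrightarrow> 0) (at_right 0)"
      by (rule tendsto_mult_right_zero[OF tendsto_norm_zero])
    ultimately have "((\<lambda>r. S (\<epsilon> - r) w - S \<epsilon> w) \<longlongrightarrow> 0) (at_right 0)"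
      by (rule Lim_null_comparison)
    then show ?thesis by (simp add: LIM_zero_iff)
  qed
  then show ?thesis
    unfolding filterlim_at_left_to_0 using \<open>0 < \<delta>\<close> by blast
qed

lemma convex_C0_semigroup_tendsto_at_left:
  assumes bl: "banach_lattice TYPE('a)" and "0 < t"
  shows "((\<lambda>s. S s w) \<longlongrightarrow> S t w) (at_left t)"
proof -
  obtain \<delta> where "0 < \<delta>"
    and small: "\<And>\<epsilon>. 0 < \<epsilon> \<Longrightarrow> \<epsilon> \<le> \<delta> \<Longrightarrow> ((\<lambda>r. S (\<epsilon> - r) w) \<longlongrightarrow> S \<epsilon> w) (at_right 0)"
    using convex_C0_semigroup_tendsto_at_left_small[OF bl, of w]
    unfolding filterlim_at_left_to_0 by blast
  define \<epsilon> where "\<epsilon> = min \<delta> t"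
  have \<epsilon>: "0 < \<epsilon>" "\<epsilon> \<le> \<delta>" "\<epsilon> \<le> t"
    using \<open>0 < \<delta>\<close> \<open>0 < t\<close> by (auto simp: \<epsilon>_def)
  have "isCont (S (t - \<epsilon>)) (S \<epsilon> w)"
    using \<epsilon> by (intro convex_C0_semigroup_isCont[OF bl]) simp
  then have "((\<lambda>r. S (t - \<epsilon>) (S (\<epsilon> - r) w)) \<longlongrightarrow> S (t - \<epsilon>) (S \<epsilon> w)) (at_right 0)"
    using small[OF \<epsilon>(1,2)] by (rule isCont_tendsto_compose)
  moreover have "S (t - \<epsilon>) (S \<epsilon> w) = S t w"
    using \<epsilon> by (simp flip: convex_C0_semigroup_add)
  moreover have "eventually (\<lambda>r. S (t - \<epsilon>) (S (\<epsilon> - r) w) = S (t - r) w) (at_right 0)"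
    using eventually_at_right_real[OF \<open>0 < \<epsilon>\<close>]
    by eventually_elim (use \<epsilon> in \<open>simp flip: convex_C0_semigroup_add\<close>)
  ultimately show ?thesis
    unfolding filterlim_at_left_to_0 by (simp add: Lim_transform_eventually)
qed

lemma convex_C0_semigroup_orbit_continuous:
  assumes bl: "banach_lattice TYPE('a)" and "0 \<le> t"
  shows "((\<lambda>s. S s w) \<longlongrightarrow> S t w) (at t within {0..})"
proof (cases "t = 0")
  case True
  then show ?thesis
    using convex_C0_semigroup_tendsto_at_right[OF \<open>0 \<le> t\<close>] by (simp add: at_within_Ici_at_right)
next
  case False
  with assms have "((\<lambda>s. S s w) \<longlongrightarrow> S t w) (at t)"
    by (intro filterlim_split_at convex_C0_semigroup_tendsto_at_left convex_C0_semigroup_tendsto_at_right)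
      simp_all
  then show ?thesis by (rule tendsto_mono[OF at_le, rotated]) simp
qed

section \<open>Continuity of the directional derivatives\<close>

lemma diff_quotient_orbit_continuous:
  assumes bl: "banach_lattice TYPE('a)" and "0 \<le> t"
  shows "((\<lambda>s. diff_quotient (S s) x y h) \<longlongrightarrow> diff_quotient (S t) x y h) (at t within {0..})"
  unfolding diff_quotient_def
  by (intro tendsto_scaleR tendsto_const tendsto_diff
      convex_C0_semigroup_orbit_continuous[OF bl \<open>0 \<le> t\<close>])

lemma dir_deriv_tendsto_if_eq:
  assumes bl: "banach_lattice TYPE('a)" and oc: "order_continuous_norm TYPE('a)" and "0 \<le> t"
    and eq: "dir_deriv_plus S t x y = dir_deriv_minus S t x y"
  shows "((\<lambda>s. dir_deriv_plus S s x y) \<longlongrightarrow> dir_deriv_plus S t x y) (at t within {0..})"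
    and "((\<lambda>s. dir_deriv_minus S s x y) \<longlongrightarrow> dir_deriv_minus S t x y) (at t within {0..})"
proof -
  let ?q = "\<lambda>s. diff_quotient (S s) x y"
  have "eventually (\<lambda>s. 0 \<le> s) (at t within {0..})"
    by (simp add: eventually_at_filter)
  then have bounds: "eventually (\<lambda>s. ?q s (- h) \<le> dir_deriv_minus S s x y
      \<and> dir_deriv_minus S s x y \<le> dir_deriv_plus S s x y \<and> dir_deriv_plus S s x y \<le> ?q s h)
      (at t within {0..})" if "0 < h" for h
  proof eventually_elim
    case (elim s)
    then have "convex_operator (S s)" by (rule convex_C0_semigroup_convex)
    from dir_deriv_bounds[where S = S and t = s and x = x and y = y, OF bl oc this that]
    show ?case by blast
  qed
  have cv: "convex_operator (S t)" using \<open>0 \<le> t\<close> by (rule convex_C0_semigroup_convex)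
  have lim_lo: "((\<lambda>h. ?q t (- h)) \<longlongrightarrow> dir_deriv_plus S t x y) (at_right 0)"
    using dir_deriv_minus_tendsto(2)[where S = S and t = t, OF bl oc cv] eq by simp
  have lim_up: "(?q t \<longlongrightarrow> dir_deriv_plus S t x y) (at_right 0)"
    by (rule dir_deriv_plus_tendsto(2)[where S = S and t = t, OF bl oc cv])
  have squeeze: "(f \<longlongrightarrow> dir_deriv_plus S t x y) (at t within {0..})"
    if "\<And>h. 0 < h \<Longrightarrow> eventually (\<lambda>s. ?q s (- h) \<le> f s \<and> f s \<le> ?q s h) (at t within {0..})"
    for f
    using that diff_quotient_orbit_continuous[OF bl \<open>0 \<le> t\<close>]
      diff_quotient_orbit_continuous[OF bl \<open>0 \<le> t\<close>] lim_lo lim_up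
    by (rule banach_lattice_tendsto_squeeze[OF bl])
  show "((\<lambda>s. dir_deriv_plus S s x y) \<longlongrightarrow> dir_deriv_plus S t x y) (at t within {0..})"
    by (rule squeeze, rule eventually_mono[OF bounds]) (auto intro: order_trans)
  show "((\<lambda>s. dir_deriv_minus S s x y) \<longlongrightarrow> dir_deriv_minus S t x y) (at t within {0..})"
    unfolding eq[symmetric]
    by (rule squeeze, rule eventually_mono[OF bounds]) (auto intro: order_trans)
qed

lemma dir_deriv_at_zero:
  shows "dir_deriv_plus S 0 x y = y" and "dir_deriv_minus S 0 x y = y"
proof -
  have "diff_quotient (S 0) x y h = y" if "h \<noteq> 0" for h
    using that by (simp add: diff_quotient_def convex_C0_semigroup_zero)
  then have "diff_quotient (S 0) x y ` {0<..} = {y}" "diff_quotient (S 0) x y ` {..<0} = {y}"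
    by (force intro: image_eqI[of _ _ 1], force intro: image_eqI[of _ _ "-1"])
  then show "dir_deriv_plus S 0 x y = y" and "dir_deriv_minus S 0 x y = y"
    unfolding dir_deriv_plus_eq dir_deriv_minus_eq
    by (auto intro!: lat_Inf_eq lat_Sup_eq simp: is_lat_inf_def is_lat_sup_def)
qed

end

theorem proposition3p2:
  fixes S :: "real \<Rightarrow> 'a::{banach, ordered_real_vector, lattice} \<Rightarrow> 'a"
    and x y :: 'a and t :: real
  assumes "banach_lattice TYPE('a)"
    and "order_continuous_norm TYPE('a)"
    and "convex_C0_semigroup S"
    and "t \<ge> 0"
    and "dir_deriv_plus S t x y = dir_deriv_minus S t x y"
  shows "continuous (at t within {0..}) (\<lambda>s. dir_deriv_plus S s x y) \<and>
         continuous (at t within {0..}) (\<lambda>s. dir_deriv_minus S s x y) \<and>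
         ((\<lambda>s. dir_deriv_plus S s x y) \<longlongrightarrow> y) (at_right 0) \<and>
         ((\<lambda>s. dir_deriv_minus S s x y) \<longlongrightarrow> y) (at_right 0)"
proof -
  note at_zero = dir_deriv_at_zero[OF assms(3), of x y]
  have "((\<lambda>s. dir_deriv_plus S s x y) \<longlongrightarrow> y) (at 0 within {0..})"
    and "((\<lambda>s. dir_deriv_minus S s x y) \<longlongrightarrow> y) (at 0 within {0..})"
    using dir_deriv_tendsto_if_eq[OF assms(3,1,2) order.refl, of x y] at_zero by simp_all
  then show ?thesis
    using dir_deriv_tendsto_if_eq[OF assms(3,1,2,4,5)] unfolding continuous_within at_within_Ici_at_right
    by blast
qed

end
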